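(* Let $\mathbb{S}=(S,\Sigma,\{\tau_a\mid a\in L\})$ be an LMP. Then $\sigma(\llbracket\mathcal{L}\rrbracket)\subseteq\mathcal{G}(\sigma(\llbracket\mathcal{L}\rrbracket))$ and $\mathcal{O}(\sim_e)\subseteq{\sim_e}$.
   Context: A labelled Markov process (LMP) is a triple $\mathbb{S}=(S,\Sigma,\{\tau_a\mid a\in L\})$ where $(S,\Sigma)$ is a measurable space, $L$ is a countable set of labels, and each $\tau_a:S\times\Sigma\to[0,1]$ is a Markov kernel: $\tau_a(s,\cdot)$ is a subprobability measure on $\Sigma$ for every $s$, and $\tau_a(\cdot,X)$ is $\Sigma$-measurable for every $X\in\Sigma$. For a relation $R\subseteq S\times S$, a set $A\subseteq S$ is $R$-closed if $x\in A$ and $xRs$ imply $s\in A$; $\Sigma(R)$ denotes the family of $R$-closed sets belonging to $\Sigma$. For $\Gamma\subseteq\mathcal{P}(S)$, $\mathcal{R}(\Gamma)=\{(s,t):\forall A\in\Gamma\ (s\in A\iff t\in A)\}$. For $\Lambda\subseteq\Sigma$, $\mathcal{R}^T(\Lambda)=\{(s,t):\forall a\in L\ \forall E\in\Lambda\ \tau_a(s,E)=\tau_a(t,E)\}$. Operators: $\mathcal{O}(R)=\mathcal{R}^T(\Sigma(R))$ for relations $R$ and $\mathcal{G}(\Lambda)=\Sigma(\mathcal{R}^T(\Lambda))$ for $\Lambda\subseteq\Sigma$. The logic $\mathcal{L}$ has formulas $\phi::=\top\mid\phi_1\wedge\phi_2\mid\langle a\rangle_{>q}\phi$ ($a\in L$,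 $q\in\mathbb{Q}\cap[0,1]$) with $\llbracket\top\rrbracket=S$, $\llbracket\phi\wedge\psi\rrbracket=\llbracket\phi\rrbracket\cap\llbracket\psi\rrbracket$, $\llbracket\langle a\rangle_{>q}\phi\rrbracket=\{s:\tau_a(s,\llbracket\phi\rrbracket)>q\}$; $\sigma(\llbracket\mathcal{L}\rrbracket)$ is the $\sigma$-algebra generated by all $\llbracket\phi\rrbracket$. Event bisimilarity is ${\sim_e}=\mathcal{R}(\sigma(\llbracket\mathcal{L}\rrbracket))$. *)

theory Defs
  imports "HOL-Probability.Probability"
begin

text \<open>The value tau_a(s,E) is  measure (tau a s) E.\<close>

definition LMP :: "'s measure \<Rightarrow> 'l set \<Rightarrow> ('l \<Rightarrow> 's \<Rightarrow> 's measure) \<Rightarrow> bool" where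
  "LMP M L tau \<longleftrightarrow> countable L \<and> (\<forall>a\<in>L. tau a \<in> M \<rightarrow>\<^sub>M subprob_algebra M)"

definition closed_sets :: "'s measure \<Rightarrow> ('s \<times> 's) set \<Rightarrow> 's set set" where
  "closed_sets M R = {A \<in> sets M. \<forall>x s. x \<in> A \<and> (x, s) \<in> R \<longrightarrow> s \<in> A}"

definition rel_of :: "'s measure \<Rightarrow> 's set set \<Rightarrow> ('s \<times> 's) set" where
  "rel_of M \<Gamma> = {(s, t). s \<in> space M \<and> t \<in> space M \<and> (\<forall>A\<in>\<Gamma>. s \<in> A \<longleftrightarrow> t \<in> A)}"

definition relT :: "'s measure \<Rightarrow> 'l set \<Rightarrow> ('l \<Rightarrow> 's \<Rightarrow> 's measure) \<Rightarrow> 's set set \<Rightarrow> ('s \<times> 's) set" where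
  "relT M L tau \<Lambda> = {(s, t). s \<in> space M \<and> t \<in> space M \<and>
      (\<forall>a\<in>L. \<forall>E\<in>\<Lambda>. measure (tau a s) E = measure (tau a t) E)}"

definition opO :: "'s measure \<Rightarrow> 'l set \<Rightarrow> ('l \<Rightarrow> 's \<Rightarrow> 's measure) \<Rightarrow> ('s \<times> 's) set \<Rightarrow> ('s \<times> 's) set" where
  "opO M L tau R = relT M L tau (closed_sets M R)"

definition opG :: "'s measure \<Rightarrow> 'l set \<Rightarrow> ('l \<Rightarrow> 's \<Rightarrow> 's measure) \<Rightarrow> 's set set \<Rightarrow> 's set set" where
  "opG M L tau \<Lambda> = closed_sets M (relT M L tau \<Lambda>)"

datatype 'l form = Top | Conj "'l form" "'l form" | Dia 'l rat "'l form"

fun wf_form :: "'l set \<Rightarrow> 'l form \<Rightarrow> bool" where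
  "wf_form L Top = True"
| "wf_form L (Conj f g) = (wf_form L f \<and> wf_form L g)"
| "wf_form L (Dia a q f) = (a \<in> L \<and> 0 \<le> q \<and> q \<le> 1 \<and> wf_form L f)"

fun sem :: "'s measure \<Rightarrow> ('l \<Rightarrow> 's \<Rightarrow> 's measure) \<Rightarrow> 'l form \<Rightarrow> 's set" where
  "sem M tau Top = space M"
| "sem M tau (Conj f g) = sem M tau f \<inter> sem M tau g"
| "sem M tau (Dia a q f) = {s \<in> space M. measure (tau a s) (sem M tau f) > real_of_rat q}"

definition sigmaL :: "'s measure \<Rightarrow> 'l set \<Rightarrow> ('l \<Rightarrow> 's \<Rightarrow> 's measure) \<Rightarrow> 's set set" where
  "sigmaL M L tau = sigma_sets (space M) {sem M tau f | f. wf_form L f}"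

definition event_bisim :: "'s measure \<Rightarrow> 'l set \<Rightarrow> ('l \<Rightarrow> 's \<Rightarrow> 's measure) \<Rightarrow> ('s \<times> 's) set" where
  "event_bisim M L tau = rel_of M (sigmaL M L tau)"

end

theory Submission
  imports Defs
begin

text \<open>Two states whose transition measures agree on every formula satisfy the same formulas,
  by induction on formulas; the family of sets separating no such pair is a \<sigma>-algebra, so it
  contains \<open>\<sigma>(\<lbrakk>\<L>\<rbrakk>)\<close>. Hence \<open>\<R>\<^sup>T\<close> of any family containing the formula sets is contained
  in event bisimilarity. Both claims follow: the sets of \<open>\<sigma>(\<lbrakk>\<L>\<rbrakk>)\<close> and the formula sets are
  closed under event bisimilarity.\<close>

lemma sem_in_sets:
  assumes "LMP M L tau" "wf_form L f"
  shows "sem M tau f \<in> sets M"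
  using assms(2)
proof (induction f)
  case (Dia a q f)
  then have "a \<in> L" and f: "sem M tau f \<in> sets M" by auto
  then have "tau a \<in> M \<rightarrow>\<^sub>M subprob_algebra M" using assms(1) by (auto simp: LMP_def)
  then have "(\<lambda>s. measure (tau a s) (sem M tau f)) \<in> borel_measurable M"
    by (rule measurable_compose[OF _ measurable_measure_subprob_algebra[OF f]])
  then have "{s \<in> space M. real_of_rat q < measure (tau a s) (sem M tau f)} \<in> sets M"
    by measurable
  then show ?case by simp
qed auto

lemma sem_in_sigmaL: "wf_form L f \<Longrightarrow> sem M tau f \<in> sigmaL M L tau"
  unfolding sigmaL_def by (rule sigma_sets.Basic) blast

lemma sigmaL_subset_sets:
  assumes "LMP M L tau"
  shows "sigmaL M L tau \<subseteq> sets M"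
  unfolding sigmaL_def
  by (rule sets.sigma_sets_subset) (auto intro: sem_in_sets[OF assms])

lemma sigma_sets_not_separating:
  assumes "A \<in> sigma_sets \<Omega> G" "s \<in> \<Omega>" "t \<in> \<Omega>" "\<And>A. A \<in> G \<Longrightarrow> s \<in> A \<longleftrightarrow> t \<in> A"
  shows "s \<in> A \<longleftrightarrow> t \<in> A"
  using assms(1) by induction (use assms(2-4) in auto)

lemma sem_not_separating:
  assumes "(s, t) \<in> relT M L tau {sem M tau f | f. wf_form L f}" "wf_form L f"
  shows "s \<in> sem M tau f \<longleftrightarrow> t \<in> sem M tau f"
proof -
  have eq: "measure (tau a s) (sem M tau g) = measure (tau a t) (sem M tau g)"
    if "a \<in> L" "wf_form L g" for a g
    using assms(1) that by (auto simp: relT_def)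
  have space: "s \<in> space M" "t \<in> space M"
    using assms(1) by (auto simp: relT_def)
  show ?thesis
    using assms(2) by (induction f) (use eq space in auto)
qed

lemma relT_antimono: "\<Lambda> \<subseteq> \<Lambda>' \<Longrightarrow> relT M L tau \<Lambda>' \<subseteq> relT M L tau \<Lambda>"
  unfolding relT_def by blast

lemma relT_formulas_subset_event_bisim:
  assumes "{sem M tau f | f. wf_form L f} \<subseteq> \<Lambda>"
  shows "relT M L tau \<Lambda> \<subseteq> event_bisim M L tau"
proof safe
  fix s t assume "(s, t) \<in> relT M L tau \<Lambda>"
  then have st: "(s, t) \<in> relT M L tau {sem M tau f | f. wf_form L f}"
    using relT_antimono[OF assms] by blast
  then have "s \<in> space M" "t \<in> space M" by (auto simp: relT_def)
  moreover have "s \<in> A \<longleftrightarrow> t \<in> A" if "A \<in> sigmaL M L tau" for A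
    using that unfolding sigmaL_def
    by (rule sigma_sets_not_separating)
       (use \<open>s \<in> space M\<close> \<open>t \<in> space M\<close> in \<open>auto dest: sem_not_separating[OF st]\<close>)
  ultimately show "(s, t) \<in> event_bisim M L tau"
    by (simp add: event_bisim_def rel_of_def)
qed

lemma closed_sets_rel_of:
  assumes "\<Gamma> \<subseteq> sets M"
  shows "\<Gamma> \<subseteq> closed_sets M (rel_of M \<Gamma>)"
  using assms by (auto simp: closed_sets_def rel_of_def)

lemma closed_sets_mono: "R \<subseteq> R' \<Longrightarrow> closed_sets M R' \<subseteq> closed_sets M R"
  unfolding closed_sets_def by blast

theorem corollary3p5:
  fixes M :: "'s measure" and L :: "'l set" and tau :: "'l \<Rightarrow> 's \<Rightarrow> 's measure"
  assumes "LMP M L tau"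
  shows "sigmaL M L tau \<subseteq> opG M L tau (sigmaL M L tau) \<and>
         opO M L tau (event_bisim M L tau) \<subseteq> event_bisim M L tau"
proof
  have formulas_in_sigmaL: "{sem M tau f | f. wf_form L f} \<subseteq> sigmaL M L tau"
    using sem_in_sigmaL by blast
  have sigmaL_closed: "sigmaL M L tau \<subseteq> closed_sets M (event_bisim M L tau)"
    unfolding event_bisim_def by (rule closed_sets_rel_of[OF sigmaL_subset_sets[OF assms]])
  have "relT M L tau (sigmaL M L tau) \<subseteq> event_bisim M L tau"
    by (rule relT_formulas_subset_event_bisim[OF formulas_in_sigmaL])
  then have "closed_sets M (event_bisim M L tau) \<subseteq> opG M L tau (sigmaL M L tau)"
    unfolding opG_def by (rule closed_sets_mono)
  with sigmaL_closed show "sigmaL M L tau \<subseteq> opG M L tau (sigmaL M L tau)"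
    by (rule order_trans)
  show "opO M L tau (event_bisim M L tau) \<subseteq> event_bisim M L tau"
    unfolding opO_def
    by (rule relT_formulas_subset_event_bisim[OF order_trans[OF formulas_in_sigmaL sigmaL_closed]])
qed

end
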